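(* Let $F_3$ be the free group on the generators $a,b,c$, and let $\sigma_1,\sigma_2$ be substitutions on the alphabet $\{a,b,c\}$ (each letter is mapped to a nonempty finite word in $a,b,c$ using only positive powers), each extended to an endomorphism of $F_3$, and assume each $\sigma_i$ acts as an automorphism of $F_3$. Assume that the substitution (abelianisation) matrix of $\sigma_1$ is primitive and unimodular, has irreducible characteristic polynomial, and has a Perron–Frobenius eigenvalue which is a Pisot number. Suppose there exists a fixed element $w\in F_3$ such that $\sigma_1(g)=w^{-1}\sigma_2(g)\,w$ for every generator $g\in\{a,b,c\}$. Then the tilings (equivalently, the bi-infinite sequences) generated by $\sigma_1$ and $\sigma_2$ are locally isomorphic, i.e. they have exactly the same finite subpatterns: the language of $\sigma_1$ equals the language of $\sigma_2$.
   Context: The substitution matrix of $\sigma$ is the $3\times 3$ matrix whose $(i,j)$ entry counts the occurrences of letter $i$ in $\sigma(j)$. The language of a substitution $\sigma$ is the set of all finite words occurring as factors (subwords) of $\sigma^n(x)$ for some $n\ge 0$ and some letter $x\in\{a,b,c\}$. The tilings generated by $\sigma$ are the geometric realisations of the bi-infinite sequences whose finite factors all lie in this language, with tile $i$ an interval of length equal to the $i$-th component of the left Perron–Frobenius eigenvector of the substitution matrix. Two tilings (or sequences) are locally isomorphic (LI) if every finite subpattern of one occurs in the other and vice versa. *)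

theory Defs
  imports "Jordan_Normal_Form.Spectral_Radius" "Jordan_Normal_Form.Char_Poly"
    "HOL-Computational_Algebra.Polynomial_Factorial"
begin

datatype letter = La | Lb | Lc

definition abc :: "letter list" where "abc = [La, Lb, Lc]"

type_synonym subst = "letter \<Rightarrow> letter list"

definition is_subst :: "subst \<Rightarrow> bool" where
  "is_subst \<sigma> \<longleftrightarrow> (\<forall>x. \<sigma> x \<noteq> [])"

text \<open>Free group F_3 on a,b,c: elements are freely reduced words over
  letters with signs (True = positive power, False = inverse).\<close>
type_synonym fword = "(letter \<times> bool) list"

fun push :: "letter \<times> bool \<Rightarrow> fword \<Rightarrow> fword" where
  "push x [] = [x]"
| "push x (y # ys) = (if fst x = fst y \<and> snd x \<noteq> snd y then ys else x # y # ys)"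

definition fnorm :: "fword \<Rightarrow> fword" where
  "fnorm w = rev (foldl (\<lambda>s x. push x s) [] w)"

definition reduced :: "fword \<Rightarrow> bool" where
  "reduced w \<longleftrightarrow> (\<forall>i. Suc i < length w \<longrightarrow>
      \<not> (fst (w ! i) = fst (w ! Suc i) \<and> snd (w ! i) \<noteq> snd (w ! Suc i)))"

definition F3 :: "fword set" where "F3 = {w. reduced w}"

definition fmult :: "fword \<Rightarrow> fword \<Rightarrow> fword" where
  "fmult u v = fnorm (u @ v)"

definition finv :: "fword \<Rightarrow> fword" where
  "finv w = rev (map (\<lambda>(x, b). (x, \<not> b)) w)"

definition pos :: "letter list \<Rightarrow> fword" where
  "pos u = map (\<lambda>x. (x, True)) u"

definition fext :: "subst \<Rightarrow> fword \<Rightarrow> fword" where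
  "fext \<sigma> w = fnorm (concat (map (\<lambda>(x, b). if b then pos (\<sigma> x) else finv (pos (\<sigma> x))) w))"

definition is_automorphism :: "subst \<Rightarrow> bool" where
  "is_automorphism \<sigma> \<longleftrightarrow> bij_betw (fext \<sigma>) F3 F3"

definition subst_matrix :: "subst \<Rightarrow> int mat" where
  "subst_matrix \<sigma> = mat 3 3 (\<lambda>(i, j). int (count_list (\<sigma> (abc ! j)) (abc ! i)))"

definition primitive_mat :: "int mat \<Rightarrow> bool" where
  "primitive_mat M \<longleftrightarrow> (\<forall>i<dim_row M. \<forall>j<dim_col M. M $$ (i, j) \<ge> 0) \<and>
     (\<exists>k>0. \<forall>i<dim_row M. \<forall>j<dim_col M. (M ^\<^sub>m k) $$ (i, j) > 0)"

definition unimodular :: "int mat \<Rightarrow> bool" where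
  "unimodular M \<longleftrightarrow> \<bar>det M\<bar> = 1"

definition pf_eigenvalue :: "int mat \<Rightarrow> real" where
  "pf_eigenvalue M = spectral_radius (map_mat of_int M)"

definition pisot :: "real \<Rightarrow> bool" where
  "pisot r \<longleftrightarrow> r > 1 \<and> (\<exists>p :: int poly. lead_coeff p = 1 \<and> irreducible p \<and>
      poly (map_poly of_int p) r = 0 \<and>
      (\<forall>z::complex. poly (map_poly of_int p) z = 0 \<longrightarrow> z \<noteq> complex_of_real r \<longrightarrow> cmod z < 1))"

definition apply_subst :: "subst \<Rightarrow> letter list \<Rightarrow> letter list" where
  "apply_subst \<sigma> w = concat (map \<sigma> w)"

definition factor :: "'a list \<Rightarrow> 'a list \<Rightarrow> bool" where
  "factor u v \<longleftrightarrow> (\<exists>p s. v = p @ u @ s)"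

definition language :: "subst \<Rightarrow> letter list set" where
  "language \<sigma> = {u. \<exists>n x. factor u ((apply_subst \<sigma> ^^ n) [x])}"

end

theory Submission
  imports Defs
begin

text \<open>
  Write the reduced conjugator as
  \<open>w = x w'\<close> with \<open>x = l\<close> or \<open>x = l\<inverse>\<close>. Every \<open>\<sigma>1(g)\<close> is a positive word, so the
  inverse letter at the junction of \<open>x\<inverse>\<close>, \<open>\<sigma>2(g)\<close> and \<open>x\<close> must cancel: either all
  \<open>\<sigma>2(g)\<close> begin with \<open>l\<close> or all end with \<open>l\<close>. Moving this \<open>l\<close> to the other end gives
  a substitution \<open>\<rho>\<close> conjugate to \<open>\<sigma>1\<close> by the shorter word \<open>w'\<close> and differing from
  \<open>\<sigma>2\<close> by a shift \<open>\<tau>(g) = l t(g)\<close>, \<open>\<rho>(g) = t(g) l\<close>. Shifted primitive substitutions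
  have the same language: \<open>\<tau>(u z) = l \<rho>(u) t(z)\<close> and every word of the language of \<open>\<tau>\<close>
  extends to the right; the other inclusion follows by reversing all words. Conjugation
  preserves exponent sums, hence the substitution matrix, so primitivity is inherited along
  the induction on \<open>w\<close>.
\<close>

definition inv_letter :: "letter \<times> bool \<Rightarrow> letter \<times> bool" where
  "inv_letter x = (fst x, \<not> snd x)"

lemma inv_letter_inv_letter [simp]: "inv_letter (inv_letter x) = x"
  by (simp add: inv_letter_def)

lemma inv_letter_eq_iff: "y = inv_letter x \<longleftrightarrow> fst x = fst y \<and> snd x \<noteq> snd y"
  by (cases x; cases y) (auto simp: inv_letter_def)

lemma inv_letter_eq_sym: "y = inv_letter x \<longleftrightarrow> x = inv_letter y"
  by (metis inv_letter_inv_letter)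

lemma push_Cons [simp]: "push x (y # ys) = (if y = inv_letter x then ys else x # y # ys)"
  by (simp add: inv_letter_eq_iff)

declare push.simps(2) [simp del]

lemma finv_conv_inv_letter: "finv w = rev (map inv_letter w)"
  by (simp add: finv_def inv_letter_def case_prod_beta)

lemma finv_Cons: "finv (x # w) = finv w @ [inv_letter x]"
  by (simp add: finv_conv_inv_letter)

lemma reduced_Nil [simp]: "reduced []"
  by (simp add: reduced_def)

lemma reduced_Cons: "reduced (x # ys) \<longleftrightarrow> reduced ys \<and> (ys \<noteq> [] \<longrightarrow> hd ys \<noteq> inv_letter x)"
proof
  assume r: "reduced (x # ys)"
  have "reduced ys"
    unfolding reduced_def
  proof (intro allI impI)
    fix i assume "Suc i < length ys"
    then show "\<not> (fst (ys ! i) = fst (ys ! Suc i) \<and> snd (ys ! i) \<noteq> snd (ys ! Suc i))"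
      using r[unfolded reduced_def, rule_format, of "Suc i"] by simp
  qed
  moreover have "ys \<noteq> [] \<longrightarrow> hd ys \<noteq> inv_letter x"
    using r[unfolded reduced_def, rule_format, of 0] by (cases ys) (auto simp: inv_letter_eq_iff)
  ultimately show "reduced ys \<and> (ys \<noteq> [] \<longrightarrow> hd ys \<noteq> inv_letter x)" by blast
next
  assume "reduced ys \<and> (ys \<noteq> [] \<longrightarrow> hd ys \<noteq> inv_letter x)"
  then show "reduced (x # ys)"
    unfolding reduced_def
    by (auto simp: nth_Cons' inv_letter_eq_iff hd_conv_nth)
qed

lemma reduced_append:
  "reduced (xs @ ys) \<longleftrightarrow> reduced xs \<and> reduced ys \<and>
     (xs \<noteq> [] \<longrightarrow> ys \<noteq> [] \<longrightarrow> hd ys \<noteq> inv_letter (last xs))"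
  by (induction xs) (auto simp: reduced_Cons)

lemma reduced_rev: "reduced (rev xs) \<longleftrightarrow> reduced xs"
  by (induction xs) (auto simp: reduced_append reduced_Cons last_rev inv_letter_eq_sym)

lemma reduced_map_inv_letter: "reduced (map inv_letter w) \<longleftrightarrow> reduced w"
  by (induction w) (auto simp: reduced_Cons hd_map inv_letter_def)

lemma reduced_finv: "reduced w \<Longrightarrow> reduced (finv w)"
  by (simp add: finv_conv_inv_letter reduced_rev reduced_map_inv_letter)

lemma reduced_pos: "reduced (pos u)"
  by (induction u) (auto simp: pos_def reduced_Cons hd_map inv_letter_def)

text \<open>\<open>fnorm\<close> runs a stack machine; the stack \<open>s\<close> holds the reduced prefix read so far, reversed.\<close>

lemma fnorm_conv_fold: "fnorm w = rev (fold push w [])"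
  by (simp add: fnorm_def foldl_conv_fold)

lemma fold_push_reduced: "reduced (rev s @ w) \<Longrightarrow> fold push w s = rev w @ s"
proof (induction w arbitrary: s)
  case (Cons x w)
  have "push x s = x # s"
    using Cons.prems by (cases s) (auto simp: reduced_append reduced_Cons inv_letter_eq_sym)
  then show ?case using Cons.IH[of "x # s"] Cons.prems by simp
qed simp

lemma reduced_fold_push: "reduced (rev s) \<Longrightarrow> reduced (rev (fold push w s))"
proof (induction w arbitrary: s)
  case (Cons x w)
  have "reduced (rev (push x s))"
    using Cons.prems by (cases s) (auto simp: reduced_append reduced_Cons inv_letter_eq_sym)
  then show ?case using Cons.IH by simp
qed simp

lemma reduced_fnorm: "reduced (fnorm w)"
  using reduced_fold_push[of "[]" w] by (simp add: fnorm_conv_fold)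

lemma fnorm_reduced_id: "reduced w \<Longrightarrow> fnorm w = w"
  using fold_push_reduced[of "[]" w] by (simp add: fnorm_conv_fold)

lemma fnorm_fnorm_append: "fnorm (fnorm u @ v) = fnorm (u @ v)"
proof -
  have "fold push (fnorm u) [] = fold push u []"
    using fold_push_reduced[of "[]" "fnorm u"] reduced_fnorm[of u] by (simp add: fnorm_conv_fold)
  then show ?thesis by (simp add: fnorm_conv_fold)
qed

lemma push_inv_letter_push: "reduced (rev s) \<Longrightarrow> push (inv_letter x) (push x s) = s"
proof (cases s)
  case (Cons y ys)
  assume "reduced (rev s)"
  then have "ys \<noteq> [] \<Longrightarrow> hd ys \<noteq> inv_letter y"
    using Cons by (auto simp: reduced_append last_rev inv_letter_eq_sym)
  then show ?thesis
    using Cons by (cases ys) auto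
qed simp

lemma fnorm_cancel: "fnorm (u @ [x, inv_letter x] @ v) = fnorm (u @ v)"
  using push_inv_letter_push[OF reduced_fold_push[of "[]" u], of x]
  by (simp add: fnorm_conv_fold)

definition exponent_sum :: "letter \<Rightarrow> fword \<Rightarrow> int" where
  "exponent_sum a w = (\<Sum>x\<leftarrow>w. if fst x = a then (if snd x then 1 else -1) else 0)"

lemma exponent_sum_Nil [simp]: "exponent_sum a [] = 0"
  by (simp add: exponent_sum_def)

lemma exponent_sum_append [simp]: "exponent_sum a (u @ v) = exponent_sum a u + exponent_sum a v"
  by (simp add: exponent_sum_def)

lemma exponent_sum_rev [simp]: "exponent_sum a (rev w) = exponent_sum a w"
  by (simp add: exponent_sum_def rev_map[symmetric] sum_list_rev)

lemma exponent_sum_push: "exponent_sum a (push x s) = exponent_sum a (x # s)"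
  by (cases s) (auto simp: exponent_sum_def inv_letter_def)

lemma exponent_sum_fnorm [simp]: "exponent_sum a (fnorm w) = exponent_sum a w"
proof -
  have "exponent_sum a (fold push w s) = exponent_sum a (rev w @ s)" for s
    by (induction w arbitrary: s) (simp_all add: exponent_sum_push)
  then show ?thesis by (simp add: fnorm_conv_fold)
qed

lemma exponent_sum_finv [simp]: "exponent_sum a (finv w) = - exponent_sum a w"
  by (induction w) (auto simp: finv_Cons finv_def exponent_sum_def inv_letter_def)

lemma exponent_sum_pos [simp]: "exponent_sum a (pos u) = int (count_list u a)"
  by (induction u) (auto simp: pos_def exponent_sum_def)

lemma pos_inject: "pos u = pos v \<Longrightarrow> u = v"
  by (simp add: pos_def inj_map_eq_map inj_def)

lemma pos_eq_Nil_iff [simp]: "pos u = [] \<longleftrightarrow> u = []"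
  by (simp add: pos_def)

lemma hd_pos: "u \<noteq> [] \<Longrightarrow> hd (pos u) = (hd u, True)"
  by (simp add: pos_def hd_map)

lemma last_pos: "u \<noteq> [] \<Longrightarrow> last (pos u) = (last u, True)"
  by (simp add: pos_def last_map)

lemma reduced_finv_append_append:
  assumes "reduced v" "reduced u" "u \<noteq> []"
    and "v \<noteq> [] \<Longrightarrow> hd u \<noteq> hd v \<and> hd v \<noteq> inv_letter (last u)"
  shows "reduced (finv v @ u @ v)"
  using assms reduced_finv[OF assms(1)]
  by (auto simp: reduced_append finv_conv_inv_letter last_rev hd_map)

definition conjugate_substs :: "fword \<Rightarrow> subst \<Rightarrow> subst \<Rightarrow> bool" where
  "conjugate_substs w \<sigma> \<tau> \<longleftrightarrow> (\<forall>g. pos (\<sigma> g) = fnorm (finv w @ pos (\<tau> g) @ w))"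

lemma subst_matrix_eq_if_conjugate_substs:
  assumes "conjugate_substs w \<sigma> \<tau>"
  shows "subst_matrix \<sigma> = subst_matrix \<tau>"
proof -
  have "count_list (\<sigma> g) a = count_list (\<tau> g) a" for g a
    using arg_cong[OF assms[unfolded conjugate_substs_def, rule_format, of g], of "exponent_sum a"]
    by simp
  then show ?thesis
    by (simp add: subst_matrix_def)
qed

lemma conjugate_substs_Nil: "conjugate_substs [] \<sigma> \<tau> \<Longrightarrow> \<sigma> = \<tau>"
  by (rule ext, rule pos_inject)
    (simp add: conjugate_substs_def finv_def fnorm_reduced_id[OF reduced_pos])

lemma conjugate_substs_Cons_boundary:
  assumes "reduced ((l, b) # w)" "is_subst \<tau>" "conjugate_substs ((l, b) # w) \<sigma> \<tau>"
  shows "if b then hd (\<tau> g) = l else last (\<tau> g) = l"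
proof (rule ccontr)
  assume boundary: "\<not> ?thesis"
  let ?v = "(l, b) # w"
  have "reduced (finv ?v @ pos (\<tau> g) @ ?v)"
    using assms(1,2) boundary
    by (intro reduced_finv_append_append)
      (auto simp: reduced_pos is_subst_def hd_pos last_pos inv_letter_def split: if_splits)
  then have "pos (\<sigma> g) = finv ?v @ pos (\<tau> g) @ ?v"
    using assms(3) by (simp add: conjugate_substs_def fnorm_reduced_id)
  moreover have "(l, False) \<in> set (finv ?v @ pos (\<tau> g) @ ?v)"
    by (cases b) (auto simp: finv_Cons inv_letter_def)
  ultimately have "(l, False) \<in> set (pos (\<sigma> g))"
    by simp
  then show False
    by (auto simp: pos_def)
qed

definition shift_conjugate :: "subst \<Rightarrow> subst \<Rightarrow> bool" where
  "shift_conjugate \<tau> \<rho> \<longleftrightarrow> (\<exists>l t. \<forall>g. \<tau> g = l # t g \<and> \<rho> g = t g @ [l])"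

lemma conjugate_substs_Cons_shift:
  assumes "reduced ((l, b) # w)" "is_subst \<tau>" "conjugate_substs ((l, b) # w) \<sigma> \<tau>"
  obtains \<rho> where "is_subst \<rho>" "conjugate_substs w \<sigma> \<rho>" "shift_conjugate \<tau> \<rho> \<or> shift_conjugate \<rho> \<tau>"
proof (cases b)
  case True
  define t where "t g = tl (\<tau> g)" for g
  have \<tau>: "\<tau> g = l # t g" for g
    using conjugate_substs_Cons_boundary[OF assms, of g] assms(2) True
    by (metis is_subst_def list.collapse t_def)
  have "pos (\<sigma> g) = fnorm (finv w @ pos (t g @ [l]) @ w)" for g
  proof -
    have "pos (\<sigma> g) = fnorm (finv w @ [(l, False), inv_letter (l, False)] @ pos (t g @ [l]) @ w)"
      using assms(3) True by (simp add: conjugate_substs_def finv_Cons \<tau> pos_def inv_letter_def)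
    then show ?thesis
      by (simp only: fnorm_cancel)
  qed
  then have "conjugate_substs w \<sigma> (\<lambda>g. t g @ [l])"
    by (simp add: conjugate_substs_def)
  moreover have "shift_conjugate \<tau> (\<lambda>g. t g @ [l])"
    using \<tau> by (auto simp: shift_conjugate_def)
  ultimately show thesis
    using that[of "\<lambda>g. t g @ [l]"] by (simp add: is_subst_def)
next
  case False
  define t where "t g = butlast (\<tau> g)" for g
  have \<tau>: "\<tau> g = t g @ [l]" for g
    using conjugate_substs_Cons_boundary[OF assms, of g] assms(2) False
    by (metis is_subst_def append_butlast_last_id t_def)
  have "pos (\<sigma> g) = fnorm (finv w @ pos (l # t g) @ w)" for g
  proof -
    have "pos (\<sigma> g) = fnorm ((finv w @ pos (l # t g)) @ [(l, True), inv_letter (l, True)] @ w)"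
      using assms(3) False by (simp add: conjugate_substs_def finv_Cons \<tau> pos_def inv_letter_def)
    then show ?thesis
      using fnorm_cancel[of "finv w @ pos (l # t g)" "(l, True)" w] by simp
  qed
  then have "conjugate_substs w \<sigma> (\<lambda>g. l # t g)"
    by (simp add: conjugate_substs_def)
  moreover have "shift_conjugate (\<lambda>g. l # t g) \<tau>"
    using \<tau> by (auto simp: shift_conjugate_def)
  ultimately show thesis
    using that[of "\<lambda>g. l # t g"] by (simp add: is_subst_def)
qed

lemma apply_subst_Nil [simp]: "apply_subst \<tau> [] = []"
  by (simp add: apply_subst_def)

lemma apply_subst_Cons [simp]: "apply_subst \<tau> (x # u) = \<tau> x @ apply_subst \<tau> u"
  by (simp add: apply_subst_def)

lemma apply_subst_append [simp]: "apply_subst \<tau> (u @ v) = apply_subst \<tau> u @ apply_subst \<tau> v"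
  by (simp add: apply_subst_def)

lemma funpow_apply_subst_append [simp]:
  "(apply_subst \<tau> ^^ n) (u @ v) = (apply_subst \<tau> ^^ n) u @ (apply_subst \<tau> ^^ n) v"
  by (induction n) auto

lemma funpow_apply_subst_eq_Nil_iff:
  "is_subst \<tau> \<Longrightarrow> (apply_subst \<tau> ^^ n) u = [] \<longleftrightarrow> u = []"
proof (induction n)
  case (Suc n)
  have "apply_subst \<tau> v = [] \<longleftrightarrow> v = []" for v
    using Suc.prems by (cases v) (auto simp: is_subst_def)
  then show ?case using Suc by simp
qed simp

lemma factor_trans: "factor u v \<Longrightarrow> factor v w \<Longrightarrow> factor u w"
  unfolding factor_def by (elim exE) (rule exI[of _ "_ @ _"], rule exI[of _ "_ @ _"], simp)

lemma factor_funpow_apply_subst: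
  assumes "factor u v"
  shows "factor ((apply_subst \<tau> ^^ n) u) ((apply_subst \<tau> ^^ n) v)"
proof -
  obtain p s where "v = p @ u @ s"
    using assms unfolding factor_def by blast
  then show ?thesis
    unfolding factor_def
    by (intro exI[of _ "(apply_subst \<tau> ^^ n) p"] exI[of _ "(apply_subst \<tau> ^^ n) s"]) simp
qed

lemma factor_rev:
  assumes "factor u v"
  shows "factor (rev u) (rev v)"
proof -
  obtain p s where "v = p @ u @ s"
    using assms unfolding factor_def by blast
  then show ?thesis
    unfolding factor_def by (intro exI[of _ "rev s"] exI[of _ "rev p"]) simp
qed

lemma factor_rev_iff [simp]: "factor (rev u) (rev v) \<longleftrightarrow> factor u v"
  using factor_rev[of "rev u" "rev v"] factor_rev[of u v] by auto

lemma language_factor_closed: "factor u v \<Longrightarrow> v \<in> language \<tau> \<Longrightarrow> u \<in> language \<tau>"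
  unfolding language_def using factor_trans by blast

lemma singleton_in_language: "[x] \<in> language \<tau>"
  unfolding language_def factor_def by (intro CollectI exI[of _ 0] exI[of _ x] exI[of _ "[]"]) simp

lemma funpow_apply_subst_in_language:
  assumes "u \<in> language \<tau>"
  shows "(apply_subst \<tau> ^^ n) u \<in> language \<tau>"
proof -
  obtain m x where "factor u ((apply_subst \<tau> ^^ m) [x])"
    using assms unfolding language_def by blast
  then have "factor ((apply_subst \<tau> ^^ n) u) ((apply_subst \<tau> ^^ (n + m)) [x])"
    by (simp add: factor_funpow_apply_subst funpow_add)
  then show ?thesis
    unfolding language_def by blast
qed

lemma factor_funpow_extend_right:
  assumes "is_subst \<tau>" "[x, y] \<in> language \<tau>" "factor u ((apply_subst \<tau> ^^ n) [x])"
  shows "\<exists>z. u @ [z] \<in> language \<tau>"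
proof -
  obtain p s where ps: "(apply_subst \<tau> ^^ n) [x] = p @ u @ s"
    using assms(3) unfolding factor_def by blast
  obtain c r where cr: "(apply_subst \<tau> ^^ n) [y] = c # r"
    using funpow_apply_subst_eq_Nil_iff[OF assms(1), of n "[y]"]
    by (cases "(apply_subst \<tau> ^^ n) [y]") auto
  have "(apply_subst \<tau> ^^ n) [x, y] \<in> language \<tau>"
    using funpow_apply_subst_in_language[OF assms(2)] .
  moreover have "(apply_subst \<tau> ^^ n) [x, y] = p @ (u @ [hd (s @ [c])]) @ tl (s @ [c]) @ r"
    using funpow_apply_subst_append[of n \<tau> "[x]" "[y]"] ps cr by (cases s) auto
  ultimately show ?thesis
    using language_factor_closed unfolding factor_def by blast
qed

lemma language_subset_if_image_in_language:
  assumes "\<And>u. u \<in> language \<tau> \<Longrightarrow> apply_subst \<rho> u \<in> language \<tau>"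
  shows "language \<rho> \<subseteq> language \<tau>"
proof
  have iterates: "(apply_subst \<rho> ^^ n) [x] \<in> language \<tau>" for n x
    by (induction n) (simp_all add: singleton_in_language assms)
  fix u
  assume "u \<in> language \<rho>"
  then show "u \<in> language \<tau>"
    unfolding language_def[of \<rho>] using iterates language_factor_closed by blast
qed

definition rev_subst :: "subst \<Rightarrow> subst" where
  "rev_subst \<tau> x = rev (\<tau> x)"

lemma is_subst_rev_subst: "is_subst \<tau> \<Longrightarrow> is_subst (rev_subst \<tau>)"
  by (simp add: is_subst_def rev_subst_def)

lemma subst_matrix_rev_subst [simp]: "subst_matrix (rev_subst \<tau>) = subst_matrix \<tau>"
  by (simp add: subst_matrix_def rev_subst_def)

lemma funpow_apply_rev_subst:
  "(apply_subst (rev_subst \<tau>) ^^ n) (rev u) = rev ((apply_subst \<tau> ^^ n) u)"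
proof -
  have "apply_subst (rev_subst \<tau>) (rev v) = rev (apply_subst \<tau> v)" for v
    by (induction v) (simp_all add: rev_subst_def)
  then show ?thesis
    by (induction n) simp_all
qed

lemma language_rev_subst: "language (rev_subst \<tau>) = rev ` language \<tau>"
proof -
  have "factor u ((apply_subst (rev_subst \<tau>) ^^ n) [x]) \<longleftrightarrow>
      factor (rev u) ((apply_subst \<tau> ^^ n) [x])" for u n x
    using funpow_apply_rev_subst[of n \<tau> "[x]"] factor_rev_iff[of "rev u"] by simp
  then have "u \<in> language (rev_subst \<tau>) \<longleftrightarrow> rev u \<in> language \<tau>" for u
    by (simp add: language_def)
  moreover have "u \<in> rev ` language \<tau> \<longleftrightarrow> rev u \<in> language \<tau>" for u
    by (metis image_iff rev_rev_ident)
  ultimately show ?thesis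
    by blast
qed

lemma count_funpow_apply_subst:
  "count_list ((apply_subst \<tau> ^^ k) v) a =
     (\<Sum>l<3. count_list v (abc ! l) * count_list ((apply_subst \<tau> ^^ k) [abc ! l]) a)"
proof (induction v)
  case Nil
  have "(apply_subst \<tau> ^^ k) [] = []"
    by (induction k) auto
  then show ?case by simp
next
  case (Cons c v)
  have "(apply_subst \<tau> ^^ k) (c # v) = (apply_subst \<tau> ^^ k) [c] @ (apply_subst \<tau> ^^ k) v"
    using funpow_apply_subst_append[of k \<tau> "[c]" v] by simp
  then show ?case
    using Cons by (cases c) (simp_all add: numeral_3_eq_3 lessThan_Suc abc_def algebra_simps)
qed

lemma subst_matrix_power_nth:
  assumes "i < 3" "j < 3"
  shows "(subst_matrix \<tau> ^\<^sub>m k) $$ (i, j) =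
    int (count_list ((apply_subst \<tau> ^^ k) [abc ! j]) (abc ! i))"
  using assms
proof (induction k arbitrary: i j)
  case 0
  then show ?case
    by (auto simp: subst_matrix_def abc_def less_Suc_eq numeral_3_eq_3)
next
  case (Suc k)
  have "(subst_matrix \<tau> ^\<^sub>m Suc k) $$ (i, j) =
     (\<Sum>l\<in>{0..<3}. (subst_matrix \<tau> ^\<^sub>m k) $$ (i, l) * subst_matrix \<tau> $$ (l, j))"
    using Suc.prems by (simp add: subst_matrix_def scalar_prod_def)
  also have "\<dots> = (\<Sum>l\<in>{0..<3}. int (count_list ((apply_subst \<tau> ^^ k) [abc ! l]) (abc ! i)) *
       int (count_list (\<tau> (abc ! j)) (abc ! l)))"
    using Suc by (intro sum.cong) (auto simp: subst_matrix_def)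
  also have "\<dots> = int (count_list ((apply_subst \<tau> ^^ k) (\<tau> (abc ! j))) (abc ! i))"
    unfolding count_funpow_apply_subst[of k \<tau> "\<tau> (abc ! j)"]
    by (simp add: atLeast0LessThan algebra_simps)
  also have "(apply_subst \<tau> ^^ k) (\<tau> (abc ! j)) = (apply_subst \<tau> ^^ Suc k) [abc ! j]"
    by (simp only: funpow_Suc_right o_apply apply_subst_Cons apply_subst_Nil append_Nil2)
  finally show ?case .
qed

lemma ex_abc_nth: "\<exists>i<3. x = abc ! i"
  by (cases x) (auto simp: abc_def intro: exI[of _ 0] exI[of _ 1] exI[of _ 2])

lemma primitive_letters_occur:
  assumes "primitive_mat (subst_matrix \<tau>)"
  obtains k where "\<And>x z. x \<in> set ((apply_subst \<tau> ^^ k) [z])"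
proof -
  obtain k where k: "\<forall>i<3. \<forall>j<3. (subst_matrix \<tau> ^\<^sub>m k) $$ (i, j) > 0"
    using assms unfolding primitive_mat_def by (auto simp: subst_matrix_def)
  have "x \<in> set ((apply_subst \<tau> ^^ k) [z])" for x z
  proof -
    obtain i where i: "i < 3" "x = abc ! i"
      using ex_abc_nth by blast
    obtain j where j: "j < 3" "z = abc ! j"
      using ex_abc_nth by blast
    have "(subst_matrix \<tau> ^\<^sub>m k) $$ (i, j) > 0"
      using k i j by blast
    then have "count_list ((apply_subst \<tau> ^^ k) [z]) x > 0"
      using subst_matrix_power_nth[OF i(1) j(1), of \<tau> k] i j by simp
    then show ?thesis
      by (metis count_notin less_irrefl)
  qed
  then show thesis using that by blast
qed

lemma primitive_right_extendable:
  assumes "is_subst \<tau>" "primitive_mat (subst_matrix \<tau>)"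
  shows "\<exists>y. [x, y] \<in> language \<tau>"
proof -
  obtain k where k: "\<And>x z. x \<in> set ((apply_subst \<tau> ^^ k) [z])"
    using primitive_letters_occur[OF assms(2)] by blast
  have "La \<in> set ((apply_subst \<tau> ^^ k) [La])" "Lb \<in> set ((apply_subst \<tau> ^^ k) [La])"
    using k by blast+
  then obtain c d r where cdr: "(apply_subst \<tau> ^^ k) [La] = c # d # r"
    by (cases "(apply_subst \<tau> ^^ k) [La]" rule: remdups_adj.cases) auto
  have "[c, d] \<in> language \<tau>"
    unfolding language_def factor_def using cdr
    by (intro CollectI exI[of _ k] exI[of _ La] exI[of _ "[]"] exI[of _ r]) simp
  moreover have "factor [x] ((apply_subst \<tau> ^^ k) [c])"
    using k[of x c] by (auto simp: factor_def dest: split_list)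
  ultimately have "\<exists>y. [x] @ [y] \<in> language \<tau>"
    by (rule factor_funpow_extend_right[OF assms(1)])
  then show ?thesis
    by simp
qed

lemma primitive_language_extend_right:
  assumes "is_subst \<tau>" "primitive_mat (subst_matrix \<tau>)" "u \<in> language \<tau>"
  shows "\<exists>z. u @ [z] \<in> language \<tau>"
proof -
  obtain n x where "factor u ((apply_subst \<tau> ^^ n) [x])"
    using assms(3) unfolding language_def by blast
  then show ?thesis
    using primitive_right_extendable[OF assms(1,2), of x] factor_funpow_extend_right[OF assms(1)]
    by blast
qed

lemma shift_conjugate_rev_subst:
  assumes "shift_conjugate \<tau> \<rho>"
  shows "shift_conjugate (rev_subst \<rho>) (rev_subst \<tau>)"
proof -
  obtain l t where "\<And>g. \<tau> g = l # t g" "\<And>g. \<rho> g = t g @ [l]"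
    using assms unfolding shift_conjugate_def by blast
  then show ?thesis
    unfolding shift_conjugate_def rev_subst_def
    by (intro exI[of _ l] exI[of _ "\<lambda>g. rev (t g)"]) simp
qed

lemma language_subset_if_shift_conjugate:
  assumes "is_subst \<tau>" "primitive_mat (subst_matrix \<tau>)" "shift_conjugate \<tau> \<rho>"
  shows "language \<rho> \<subseteq> language \<tau>"
proof (rule language_subset_if_image_in_language)
  obtain l t where lt: "\<And>g. \<tau> g = l # t g" "\<And>g. \<rho> g = t g @ [l]"
    using assms(3) unfolding shift_conjugate_def by blast
  have shift: "apply_subst \<tau> u @ [l] = l # apply_subst \<rho> u" for u
    by (induction u) (simp_all add: lt)
  fix u
  assume "u \<in> language \<tau>"
  then obtain z where "u @ [z] \<in> language \<tau>"
    using primitive_language_extend_right[OF assms(1,2)] by blast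
  then have "apply_subst \<tau> (u @ [z]) \<in> language \<tau>"
    using funpow_apply_subst_in_language[of "u @ [z]" \<tau> 1] by simp
  moreover have "apply_subst \<tau> (u @ [z]) = [l] @ apply_subst \<rho> u @ t z"
    using shift[of u] by (simp add: lt)
  ultimately show "apply_subst \<rho> u \<in> language \<tau>"
    using language_factor_closed unfolding factor_def by blast
qed

lemma language_eq_if_shift_conjugate:
  assumes "is_subst \<tau>" "is_subst \<rho>"
    and "primitive_mat (subst_matrix \<tau>)" "primitive_mat (subst_matrix \<rho>)"
    and "shift_conjugate \<tau> \<rho>"
  shows "language \<tau> = language \<rho>"
proof
  show "language \<rho> \<subseteq> language \<tau>"
    using language_subset_if_shift_conjugate[OF assms(1,3,5)] .
  have "language (rev_subst \<tau>) \<subseteq> language (rev_subst \<rho>)"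
    using language_subset_if_shift_conjugate[OF is_subst_rev_subst[OF assms(2)]]
      shift_conjugate_rev_subst[OF assms(5)] assms(4) by simp
  then show "language \<tau> \<subseteq> language \<rho>"
    by (simp add: language_rev_subst inj_image_subset_iff)
qed

lemma language_eq_if_conjugate_substs:
  assumes "reduced w" "is_subst \<sigma>" "is_subst \<tau>" "primitive_mat (subst_matrix \<sigma>)"
    and "conjugate_substs w \<sigma> \<tau>"
  shows "language \<sigma> = language \<tau>"
  using assms(1,3,5)
proof (induction w arbitrary: \<tau>)
  case Nil
  then show ?case
    using conjugate_substs_Nil[OF Nil.prems(3)] by simp
next
  case (Cons e w)
  obtain l b where e: "e = (l, b)"
    by (cases e)
  obtain \<rho> where \<rho>: "is_subst \<rho>" "conjugate_substs w \<sigma> \<rho>"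
      and shift: "shift_conjugate \<tau> \<rho> \<or> shift_conjugate \<rho> \<tau>"
    using conjugate_substs_Cons_shift[of l b w \<tau> \<sigma>] Cons.prems unfolding e by blast
  have "language \<sigma> = language \<rho>"
    using Cons.IH Cons.prems(1) \<rho> by (simp add: reduced_Cons)
  moreover have "primitive_mat (subst_matrix \<tau>)" "primitive_mat (subst_matrix \<rho>)"
    using assms(4) subst_matrix_eq_if_conjugate_substs[OF Cons.prems(3)]
      subst_matrix_eq_if_conjugate_substs[OF \<rho>(2)] by simp_all
  ultimately show ?case
    using shift language_eq_if_shift_conjugate[OF Cons.prems(2) \<rho>(1)]
      language_eq_if_shift_conjugate[OF \<rho>(1) Cons.prems(2)] by auto
qed

theorem mainTheorem1:
  fixes \<sigma>1 \<sigma>2 :: subst and w :: fword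
  assumes "is_subst \<sigma>1" and "is_subst \<sigma>2"
    and "is_automorphism \<sigma>1" and "is_automorphism \<sigma>2"
    and "primitive_mat (subst_matrix \<sigma>1)"
    and "unimodular (subst_matrix \<sigma>1)"
    and "irreducible (map_poly rat_of_int (char_poly (subst_matrix \<sigma>1)))"
    and "pisot (pf_eigenvalue (subst_matrix \<sigma>1))"
    and "w \<in> F3"
    and "\<forall>g. pos (\<sigma>1 g) = fmult (fmult (finv w) (pos (\<sigma>2 g))) w"
  shows "language \<sigma>1 = language \<sigma>2"
proof -
  have "conjugate_substs w \<sigma>1 \<sigma>2"
    using assms(10) by (simp add: conjugate_substs_def fmult_def fnorm_fnorm_append)
  moreover have "reduced w"
    using assms(9) by (simp add: F3_def)
  ultimately show ?thesis
    using language_eq_if_conjugate_substs assms(1,2,5) by blast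
qed

end
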